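(* Let $\gamma>0$, $R\ge600(\gamma^{3/4}+\gamma^{-3/4})$, and let $j\in\mathbb{N}$ with $$1\le j\le M_R:=\left\lfloor\frac1{32\pi}\frac{\gamma R^2}{\log R}\right\rfloor.$$ Let $w_j$ be the unique solution in $F_j$ of the equation $w=G_{j,R}(w)$ (which exists and is unique for such $R$). Then $-\frac\gamma2\le\operatorname{Im}w_j^2\le0$; consequently $z_j^2:=w_j^2+i\gamma\in\mathbb{C}_+$ and $z_j^2\in\sigma_d(L_{\gamma,R})$.
   Context: $L_{\gamma,R}=-\frac{d^2}{dx^2}+i\gamma\chi_{[0,R]}$ on $L^2(\mathbb{R}_+)$ with Dirichlet boundary condition at $0$; $\sigma_d$ denotes eigenvalues of finite algebraic multiplicity in $\mathbb{C}\setminus\mathbb{R}_+$. $\arg_-(\zeta)\in[-\pi,\pi)$, $\mathrm{sq}_-(\zeta)=\sqrt{|\zeta|}e^{\frac i2\arg_-(\zeta)}$. $A(w)=\log\left|\frac{\mathrm{sq}_-(w^2+i\gamma)-w}{\mathrm{sq}_-(w^2+i\gamma)+w}\right|$, $B_j(w)=\arg_-\!\left(\frac{\mathrm{sq}_-(w^2+i\gamma)-w}{\mathrm{sq}_-(w^2+i\gamma)+w}\right)+2\pi j$, $G_{j,R}(w)=\frac{-B_j(w)+iA(w)}{2R}$, $F_\infty=\{w:\operatorname{Re}w\le0\le\operatorname{Im}w,\ |\operatorname{Re}w|\ge2\operatorname{Im}w\}$, $F_j=\{w\in F_\infty:B_j(w)\ge2|A(w)|\}$. *)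

theory Defs
  imports "HOL-Analysis.Analysis"
begin

definition arg_m :: "complex \<Rightarrow> real" where
  "arg_m z = (if Arg z = pi then - pi else Arg z)"

definition sq_m :: "complex \<Rightarrow> complex" where
  "sq_m z = complex_of_real (sqrt (cmod z)) * exp (\<i> * complex_of_real (arg_m z / 2))"

definition quot_fun :: "real \<Rightarrow> complex \<Rightarrow> complex" where
  "quot_fun \<gamma> w = (sq_m (w^2 + \<i> * complex_of_real \<gamma>) - w) / (sq_m (w^2 + \<i> * complex_of_real \<gamma>) + w)"

definition A_fun :: "real \<Rightarrow> complex \<Rightarrow> real" where
  "A_fun \<gamma> w = ln (cmod (quot_fun \<gamma> w))"

definition B_fun :: "real \<Rightarrow> nat \<Rightarrow> complex \<Rightarrow> real" where
  "B_fun \<gamma> j w = arg_m (quot_fun \<gamma> w) + 2 * pi * real j"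

definition G_fun :: "real \<Rightarrow> nat \<Rightarrow> real \<Rightarrow> complex \<Rightarrow> complex" where
  "G_fun \<gamma> j R w = (complex_of_real (- B_fun \<gamma> j w) + \<i> * complex_of_real (A_fun \<gamma> w)) / complex_of_real (2 * R)"

definition F_inf :: "complex set" where
  "F_inf = {w. Re w \<le> 0 \<and> 0 \<le> Im w \<and> \<bar>Re w\<bar> \<ge> 2 * Im w}"

definition F_j :: "real \<Rightarrow> nat \<Rightarrow> complex set" where
  "F_j \<gamma> j = {w \<in> F_inf. B_fun \<gamma> j w \<ge> 2 * \<bar>A_fun \<gamma> w\<bar>}"

text \<open>Square integrability on R_+ (functions are only considered on [0,oo)).\<close>
definition L2p :: "(real \<Rightarrow> complex) \<Rightarrow> bool" where
  "L2p u \<longleftrightarrow> set_borel_measurable lborel {0..} u \<and>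
     set_integrable lborel {0..} (\<lambda>x. (cmod (u x))^2)"

text \<open>Graph of the operator L_{gamma,R} = -d^2/dx^2 + i gamma chi_[0,R] with Dirichlet condition:
  u is in the (maximal) domain H^2 \<inter> H^1_0 and L u = f (a.e.).  This is written in integrated form:
  u(0) = 0, u' = v with u(x) = int_0^x v, and v(x) = v(0) + int_0^x (i gamma chi u - f),
  i.e. u'' = i gamma chi u - f.\<close>
definition L_rel :: "real \<Rightarrow> real \<Rightarrow> (real \<Rightarrow> complex) \<Rightarrow> (real \<Rightarrow> complex) \<Rightarrow> bool" where
  "L_rel \<gamma> R u f \<longleftrightarrow> L2p u \<and> L2p f \<and> u 0 = 0 \<and>
     (\<exists>v. \<forall>x\<ge>0. set_integrable lborel {0..x} v \<and>
        set_integrable lborel {0..x}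
          (\<lambda>t. \<i> * complex_of_real (\<gamma> * indicator {0..R} t) * u t - f t) \<and>
        u x = (LINT t:{0..x}|lborel. v t) \<and>
        v x = v 0 + (LINT t:{0..x}|lborel. \<i> * complex_of_real (\<gamma> * indicator {0..R} t) * u t - f t))"

definition is_eigenvalue :: "real \<Rightarrow> real \<Rightarrow> complex \<Rightarrow> bool" where
  "is_eigenvalue \<gamma> R mu \<longleftrightarrow> (\<exists>u. (\<exists>x\<ge>0. u x \<noteq> 0) \<and> L_rel \<gamma> R u (\<lambda>x. mu * u x))"

text \<open>Root space (generalized eigenspace): u with (L - lambda)^k u = 0 for some k.\<close>
definition gen_eigenspace :: "real \<Rightarrow> real \<Rightarrow> complex \<Rightarrow> (real \<Rightarrow> complex) set" where
  "gen_eigenspace \<gamma> R mu = {u. \<exists>k us. us 0 = u \<and>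
      (\<forall>i<k. L_rel \<gamma> R (us i) (\<lambda>x. mu * us i x + us (Suc i) x)) \<and> (\<forall>x\<ge>0. us k x = 0)}"

text \<open>Finite algebraic multiplicity: the root space is finite dimensional (modulo functions
  vanishing on [0,oo), which are zero in L^2(R_+)).\<close>
definition finite_alg_mult :: "real \<Rightarrow> real \<Rightarrow> complex \<Rightarrow> bool" where
  "finite_alg_mult \<gamma> R mu \<longleftrightarrow> (\<exists>B. finite B \<and> (\<forall>u\<in>gen_eigenspace \<gamma> R mu.
      \<exists>c. \<forall>x\<ge>0. u x = (\<Sum>b\<in>B. c b * b x)))"

definition sigma_d :: "real \<Rightarrow> real \<Rightarrow> complex set" where
  "sigma_d \<gamma> R = {mu. mu \<notin> complex_of_real ` {0..} \<and> is_eigenvalue \<gamma> R mu \<and> finite_alg_mult \<gamma> R mu}"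

end

theory Submission
  imports Defs "HOL-Real_Asymp.Real_Asymp"
begin

(* Write z = sq_m (w^2 + i gamma), so that quot_fun gamma w = (z - w) / (z + w) and
   (z - w)(z + w) = i gamma. In real and imaginary parts the fixed-point equation says
   Re w = -B/(2R) and Im w = A/(2R), hence Im w^2 = -AB/(2R^2). On F_j both A and B are
   nonnegative, so Im w^2 <= 0. Moreover A = log(|z - w|^2 / gamma) is of order log R,
   while the bound on j gives B <= pi + gamma R^2 / (16 log R); the size condition on R then
   yields AB <= gamma R^2, i.e. Im w^2 >= -gamma/2.

   Exponentiating the fixed-point equation gives exp(2iRw)(z - w)/(z + w) = 1, which is the
   matching condition w cos(wR) = i z sin(wR). So sin(wx), continued by sin(wR) exp(iz(x - R))
   for x > R, is a square integrable eigenfunction with eigenvalue z^2 = w^2 + i gamma. Its root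
   space is one-dimensional: a solution of (L - z^2) u = c u_0 is determined on [0, R] and on
   [R, oo) by uniqueness for linear ODEs, square integrability excludes the exponentially
   growing mode, and matching at R then forces c = 0. *)

lemma arg_m_bounds: "- pi \<le> arg_m z" "arg_m z < pi"
  using mpi_less_Arg[of z] Arg_le_pi[of z] by (auto simp: arg_m_def)

lemma polar_arg_m: "complex_of_real (cmod z) * exp (\<i> * complex_of_real (arg_m z)) = z"
proof (cases "z = 0")
  case False
  have "exp (\<i> * complex_of_real (arg_m z)) = exp (\<i> * complex_of_real (Arg z))"
    by (simp add: arg_m_def exp_minus Complex_Transcendental.exp_Euler)
  then show ?thesis
    using Arg_eq[OF False] by simp
qed simp

lemma sq_m_squared: "(sq_m z)^2 = z"
proof -
  have "exp (\<i> * complex_of_real (arg_m z / 2))^2 = exp (\<i> * complex_of_real (arg_m z))"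
    by (simp add: power2_eq_square flip: exp_add)
  then have "(sq_m z)^2 = complex_of_real (cmod z) * exp (\<i> * complex_of_real (arg_m z))"
    by (simp add: sq_m_def power_mult_distrib flip: of_real_power)
  then show ?thesis
    by (simp add: polar_arg_m)
qed

lemma norm_sq_m: "cmod (sq_m z) = sqrt (cmod z)"
  by (simp add: sq_m_def norm_mult)

lemma Im_sq_m_pos:
  assumes "Im z > 0"
  shows "Im (sq_m z) > 0"
proof -
  have Arg: "0 < Arg z" "Arg z < pi"
    using Arg_lt_pi assms by auto
  then have "Im (sq_m z) = sqrt (cmod z) * sin (Arg z / 2)"
    by (simp add: sq_m_def arg_m_def Im_exp)
  moreover have "sin (Arg z / 2) > 0"
    using Arg by (intro sin_gt_zero) auto
  moreover have "z \<noteq> 0"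
    using assms by auto
  ultimately show ?thesis
    by simp
qed

lemma sq_m_diff_mult_sum:
  "(sq_m (w^2 + \<i> * complex_of_real \<gamma>) - w) * (sq_m (w^2 + \<i> * complex_of_real \<gamma>) + w)
     = \<i> * complex_of_real \<gamma>"
  using sq_m_squared[of "w^2 + \<i> * complex_of_real \<gamma>"]
  by (simp add: algebra_simps power2_eq_square)

lemma quot_fun_nonzero:
  assumes "\<gamma> \<noteq> 0"
  shows "quot_fun \<gamma> w \<noteq> 0"
  using sq_m_diff_mult_sum[of w \<gamma>] assms by (auto simp: quot_fun_def)

lemma B_fun_bounds:
  "pi * (2 * real j - 1) \<le> B_fun \<gamma> j w" "B_fun \<gamma> j w < pi * (2 * real j + 1)"
  using arg_m_bounds[of "quot_fun \<gamma> w"] by (simp_all add: B_fun_def algebra_simps)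

lemma fixed_point_Re_Im:
  assumes "R > 0" and "w = G_fun \<gamma> j R w"
  shows "Re w = - B_fun \<gamma> j w / (2 * R)" and "Im w = A_fun \<gamma> w / (2 * R)"
  by (subst assms(2); simp add: G_fun_def)+

lemma exp_fixed_point_quot:
  assumes "R > 0" and "\<gamma> \<noteq> 0" and "w = G_fun \<gamma> j R w"
  shows "exp (2 * \<i> * (w * complex_of_real R)) * quot_fun \<gamma> w = 1"
proof -
  define q where "q = quot_fun \<gamma> w"
  have q: "q \<noteq> 0"
    using quot_fun_nonzero[OF assms(2)] by (simp add: q_def)
  have "2 * \<i> * (w * complex_of_real R)
      = - complex_of_real (ln (cmod q)) - \<i> * complex_of_real (arg_m q) - complex_of_real (2 * pi * real j) * \<i>"
    using assms(1) by (subst assms(3)) (simp add: G_fun_def A_fun_def B_fun_def q_def field_simps)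
  then have "exp (2 * \<i> * (w * complex_of_real R))
      = inverse (complex_of_real (cmod q) * exp (\<i> * complex_of_real (arg_m q)))"
    using q exp_integer_2pi[of "real j"]
    by (simp add: exp_diff exp_minus exp_of_real mult.commute divide_inverse)
  then show ?thesis
    using q by (simp add: polar_arg_m q_def)
qed

lemma cos_sin_match:
  assumes "exp (2 * \<i> * a) * (z - w) = z + w"
  shows "w * cos a = \<i> * z * sin a"
proof -
  define E where "E = exp (\<i> * a)"
  have "E \<noteq> 0"
    by (simp add: E_def)
  have "E^2 * (z - w) = z + w"
    using assms by (simp add: E_def power2_eq_square mult.assoc flip: exp_add)
  then have match: "w * (E + inverse E) = z * (E - inverse E)"
    using \<open>E \<noteq> 0\<close> by (simp add: field_simps power2_eq_square)
  have "w * cos a = w * (E + inverse E) / 2"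
    by (simp add: cos_exp_eq exp_minus E_def)
  also have "\<dots> = z * (E - inverse E) / 2"
    by (simp only: match)
  also have "\<dots> = \<i> * z * ((E - inverse E) / (2 * \<i>))"
    by (simp add: field_simps)
  also have "\<dots> = \<i> * z * sin a"
    by (simp add: sin_exp_eq exp_minus E_def)
  finally show ?thesis .
qed

lemma fixed_point_matching:
  assumes "R > 0" and "\<gamma> \<noteq> 0" and "w = G_fun \<gamma> j R w"
  shows "w * cos (w * complex_of_real R)
    = \<i> * sq_m (w^2 + \<i> * complex_of_real \<gamma>) * sin (w * complex_of_real R)"
proof (rule cos_sin_match)
  let ?z = "sq_m (w^2 + \<i> * complex_of_real \<gamma>)"
  have "?z + w \<noteq> 0"
    using sq_m_diff_mult_sum[of w \<gamma>] assms(2) by auto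
  then show "exp (2 * \<i> * (w * complex_of_real R)) * (?z - w) = ?z + w"
    using exp_fixed_point_quot[OF assms] by (simp add: quot_fun_def field_simps)
qed

lemma norm_le_Re_of_F_inf:
  assumes "w \<in> F_inf"
  shows "cmod w \<le> 3 / 2 * \<bar>Re w\<bar>"
  using cmod_le[of w] assms unfolding F_inf_def by auto

lemma A_fun_le:
  assumes "\<gamma> > 0"
  shows "A_fun \<gamma> w \<le> 2 * ln ((2 * cmod w + sqrt \<gamma>) / sqrt \<gamma>)"
proof -
  define z where "z = sq_m (w^2 + \<i> * complex_of_real \<gamma>)"
  have prod: "(z - w) * (z + w) = \<i> * complex_of_real \<gamma>"
    unfolding z_def by (rule sq_m_diff_mult_sum)
  then have "z + w \<noteq> 0" "z - w \<noteq> 0"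
    using assms by auto
  have "cmod z = sqrt (cmod (w^2 + \<i> * complex_of_real \<gamma>))"
    by (simp add: z_def norm_sq_m)
  also have "\<dots> \<le> sqrt ((cmod w)^2 + \<gamma>)"
    using norm_triangle_ineq[of "w^2" "\<i> * complex_of_real \<gamma>"] assms
    by (simp add: norm_power norm_mult)
  also have "\<dots> \<le> cmod w + sqrt \<gamma>"
    using sqrt_add_le_add_sqrt[of "(cmod w)^2" \<gamma>] assms by simp
  finally have "cmod (z - w) \<le> 2 * cmod w + sqrt \<gamma>"
    using norm_triangle_ineq4[of z w] by linarith
  then have "(cmod (z - w))^2 / \<gamma> \<le> ((2 * cmod w + sqrt \<gamma>) / sqrt \<gamma>)^2"
    using assms by (simp add: power_divide divide_right_mono power_mono)
  moreover have "cmod (quot_fun \<gamma> w) = (cmod (z - w))^2 / \<gamma>"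
  proof -
    have "quot_fun \<gamma> w = (z - w) / (z + w)"
      by (simp add: quot_fun_def z_def)
    also have "\<dots> = (z - w)^2 / (\<i> * complex_of_real \<gamma>)"
      using \<open>z - w \<noteq> 0\<close> by (simp add: prod[symmetric] power2_eq_square)
    finally show ?thesis
      using assms by (simp add: norm_divide norm_mult norm_power)
  qed
  moreover have pos: "0 < (2 * cmod w + sqrt \<gamma>) / sqrt \<gamma>"
    using assms by (intro divide_pos_pos add_nonneg_pos) auto
  ultimately have "A_fun \<gamma> w \<le> ln (((2 * cmod w + sqrt \<gamma>) / sqrt \<gamma>)^2)"
    unfolding A_fun_def using \<open>z - w \<noteq> 0\<close> assms by (subst ln_le_cancel_iff) auto
  also have "\<dots> = 2 * ln ((2 * cmod w + sqrt \<gamma>) / sqrt \<gamma>)"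
    using pos by (simp add: ln_realpow)
  finally show ?thesis .
qed

lemma powr_quarter:
  fixes \<gamma> :: real
  assumes "\<gamma> > 0"
  shows "\<gamma> powr (3/4) = (\<gamma> powr (1/4))^3" and "\<gamma> powr (-3/4) = 1 / (\<gamma> powr (1/4))^3"
    and "sqrt \<gamma> = (\<gamma> powr (1/4))^2" and "\<gamma> = (\<gamma> powr (1/4))^4"
proof -
  have pow: "(\<gamma> powr (1/4))^n = \<gamma> powr (real n / 4)" for n :: nat
    using assms by (simp add: powr_powr flip: powr_realpow)
  show "\<gamma> powr (3/4) = (\<gamma> powr (1/4))^3" and "\<gamma> = (\<gamma> powr (1/4))^4"
    using pow[of 3] pow[of 4] assms by simp_all
  then show "\<gamma> powr (-3/4) = 1 / (\<gamma> powr (1/4))^3"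
    using assms by (simp add: powr_minus_divide flip: powr_minus)
  show "sqrt \<gamma> = (\<gamma> powr (1/4))^2"
    using pow[of 2] assms by (simp add: powr_half_sqrt)
qed

lemma size_condition_bounds:
  fixes t R :: real
  assumes "t > 0" and "R \<ge> 600 * (t^3 + 1 / t^3)"
  shows "1200 \<le> R" and "t^2 \<le> R / 600" and "1 / t^2 \<le> R / 600" and "1 / t^3 \<le> R / 600"
proof -
  have "2 \<le> t^3 + 1 / t^3"
  proof -
    have "0 \<le> (t^3 - 1)^2 / t^3"
      using assms by simp
    also have "\<dots> = t^3 + 1 / t^3 - 2"
      using assms by (simp add: field_simps power2_eq_square)
    finally show ?thesis
      by simp
  qed
  then have "600 * 2 \<le> 600 * (t^3 + 1 / t^3)"
    by (intro mult_left_mono) auto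
  then show R: "1200 \<le> R"
    using assms(2) by linarith
  have "0 < t^3" and "0 < 1 / t^3"
    using assms(1) by simp_all
  then have t3: "t^3 \<le> R / 600" and t3': "1 / t^3 \<le> R / 600"
    using assms(2) unfolding distrib_left by linarith+
  then show "1 / t^3 \<le> R / 600"
    by simp
  show "t^2 \<le> R / 600" and "1 / t^2 \<le> R / 600"
  proof (atomize (full), cases "t \<ge> 1")
    case True
    then have "t^2 \<le> t^3" and "1 / t^2 \<le> 1"
      by (simp_all add: power_increasing)
    then show "t^2 \<le> R / 600 \<and> 1 / t^2 \<le> R / 600"
      using t3 R by linarith
  next
    case False
    then have "t^2 \<le> 1" and "1 / t^2 \<le> 1 / t^3"
      using assms(1) by (simp_all add: power_le_one divide_simps power_decreasing)
    then show "t^2 \<le> R / 600 \<and> 1 / t^2 \<le> R / 600"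
      using t3' R by linarith
  qed
qed

lemma ln_le_quartic:
  fixes t R :: real
  assumes "t > 0" and "R \<ge> 600 * (t^3 + 1 / t^3)"
  shows "30 * ln R \<le> t^4 * R^2"
proof -
  have R: "1200 \<le> R"
    using size_condition_bounds[OF assms] by simp
  have L: "0 \<le> ln R"
    using R by simp
  have "600 \<le> t^3 * R"
    using size_condition_bounds(4)[OF assms] assms(1) by (simp add: field_simps)
  then have "600^4 * R^2 \<le> (t^3 * R)^4 * R^2"
    by (intro mult_right_mono power_mono) auto
  also have "\<dots> = (t^4 * R^2)^3"
    by algebra
  finally have big: "600^4 * R^2 \<le> (t^4 * R^2)^3" .
  have "ln R \<le> 2 * sqrt R"
    using ln_le_minus_one[of "sqrt R"] R by (simp add: ln_sqrt)
  then have "(ln R)^3 \<le> (2 * sqrt R)^3"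
    using L by (intro power_mono) auto
  also have "\<dots> = 8 * R * sqrt R"
    using R by (simp add: power3_eq_cube)
  also have "\<dots> \<le> 8 * R * R"
    using R real_sqrt_le_iff[of R "R^2"] by (intro mult_left_mono) (auto simp: power2_eq_square)
  finally have "(ln R)^3 \<le> 8 * R * R" .
  then have "(30 * ln R)^3 \<le> 27000 * (8 * R * R)"
    by (simp add: power_mult_distrib)
  also have "\<dots> \<le> 600^4 * R^2"
    by (simp add: power2_eq_square)
  also have "\<dots> \<le> (t^4 * R^2)^3"
    by (rule big)
  finally show ?thesis
    using L assms(1) by (subst (asm) power_mono_iff) auto
qed

lemma product_bound_quartic:
  fixes t R A B W :: real
  assumes t: "t > 0" and R: "R \<ge> 600 * (t^3 + 1 / t^3)"
    and "0 \<le> A" and "0 \<le> B" and B: "B \<le> pi + t^4 * R^2 / (16 * ln R)"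
    and A: "A \<le> 2 * ln ((2 * W + t^2) / t^2)" and "0 \<le> W" and W: "W \<le> 3 * B / (4 * R)"
  shows "A * B \<le> t^4 * R^2"
proof -
  note bounds = size_condition_bounds[OF t R]
  define L where "L = ln R"
  have L: "1 \<le> L"
    using bounds(1) exp_le ln_ge_iff[of R 1] unfolding L_def by linarith
  have "(pi + t^4 * R^2 / (16 * L)) / t^2 = pi / t^2 + t^2 * R^2 / (16 * L)"
    using t L by (simp add: field_simps power2_eq_square power4_eq_xxxx)
  then have "B / t^2 \<le> pi / t^2 + t^2 * R^2 / (16 * L)"
    using divide_right_mono[OF B, of "t^2"] by (simp add: L_def)
  also have "\<dots> \<le> 4 * (R / 600) + (R / 600) * R^2 / 16"
    using bounds pi_less_4 L
    by (intro add_mono divide_mono mult_mono) (auto simp: divide_simps)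
  finally have "(2 * W + t^2) / t^2 \<le> 1 + 3 / (2 * R) * (4 * (R / 600) + (R / 600) * R^2 / 16)"
    using W t bounds(1) by (simp add: field_simps)
  also have "\<dots> = 1 + 1 / 100 + R^2 / 6400"
    using bounds(1) by (simp add: field_simps power2_eq_square)
  also have "\<dots> \<le> R^2"
    using mult_mono[OF bounds(1) bounds(1)] bounds(1) by (simp add: power2_eq_square)
  moreover have "0 < (2 * W + t^2) / t^2"
    using t \<open>0 \<le> W\<close> by (intro divide_pos_pos add_nonneg_pos) auto
  ultimately have "ln ((2 * W + t^2) / t^2) \<le> ln (R^2)"
    using bounds(1) by (subst ln_le_cancel_iff) auto
  then have "A \<le> 4 * L"
    using A bounds(1) by (simp add: L_def ln_realpow)
  then have "A * B \<le> 4 * L * (pi + t^4 * R^2 / (16 * L))"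
    using B \<open>0 \<le> A\<close> \<open>0 \<le> B\<close> by (intro mult_mono) (auto simp: L_def)
  also have "\<dots> = 4 * pi * L + t^4 * R^2 / 4"
    using L by (simp add: field_simps)
  also have "\<dots> \<le> t^4 * R^2"
    using ln_le_quartic[OF t R] mult_right_mono[of pi 4 L] pi_less_4 L unfolding L_def by linarith
  finally show ?thesis .
qed

lemma Im_sq_le_0_of_F_inf:
  assumes "w \<in> F_inf"
  shows "Im (w^2) \<le> 0"
  using assms by (simp add: F_inf_def power2_eq_square mult_nonneg_nonpos)

lemma fixed_point_Re_neg:
  assumes "R > 0" and "1 \<le> j" and "w = G_fun \<gamma> j R w"
  shows "Re w < 0"
proof -
  have "0 < pi * (2 * real j - 1)"
    using assms(2) by simp
  then show ?thesis
    using fixed_point_Re_Im(1)[OF assms(1,3)] B_fun_bounds(1)[of j \<gamma> w] assms(1)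
    by (simp add: divide_pos_pos)
qed

lemma Im_sq_fixed_point_ge:
  assumes "\<gamma> > 0" and "R \<ge> 600 * (\<gamma> powr (3/4) + \<gamma> powr (-3/4))"
    and "real j \<le> 1 / (32 * pi) * (\<gamma> * R^2 / ln R)"
    and "w \<in> F_j \<gamma> j" and "w = G_fun \<gamma> j R w"
  shows "- \<gamma> / 2 \<le> Im (w^2)"
proof -
  define t where "t = \<gamma> powr (1/4)"
  have t: "t > 0"
    using assms(1) by (simp add: t_def)
  note quarter = powr_quarter[OF assms(1), folded t_def]
  have R: "R \<ge> 600 * (t^3 + 1 / t^3)"
    using assms(2) by (simp only: quarter(1,2))
  then have "R > 0"
    using size_condition_bounds(1)[OF t R] by simp
  define A B where "A = A_fun \<gamma> w" and "B = B_fun \<gamma> j w"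
  have Re: "Re w = - B / (2 * R)" and Im: "Im w = A / (2 * R)"
    using fixed_point_Re_Im[OF \<open>R > 0\<close> assms(5)] by (simp_all add: A_def B_def)
  have F: "w \<in> F_inf" "2 * \<bar>A\<bar> \<le> B"
    using assms(4) by (simp_all add: F_j_def A_def B_def)
  then have "0 \<le> A" "0 \<le> B"
    using Im \<open>R > 0\<close> by (auto simp: F_inf_def zero_le_divide_iff)
  have W: "cmod w \<le> 3 * B / (4 * R)"
    using norm_le_Re_of_F_inf[OF F(1)] Re \<open>0 \<le> B\<close> \<open>R > 0\<close> by simp
  have "2 * pi * real j \<le> t^4 * R^2 / (16 * ln R)"
    using mult_left_mono[OF assms(3), of "2 * pi"] quarter(4) by (simp add: field_simps)
  then have "B \<le> pi + t^4 * R^2 / (16 * ln R)"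
    using B_fun_bounds(2)[of \<gamma> j w] by (simp add: B_def algebra_simps)
  moreover have "A \<le> 2 * ln ((2 * cmod w + t^2) / t^2)"
    using A_fun_le[OF assms(1), of w] unfolding A_def quarter(3) .
  ultimately have "A * B \<le> t^4 * R^2"
    using product_bound_quartic[OF t R \<open>0 \<le> A\<close> \<open>0 \<le> B\<close> _ _ norm_ge_zero W] by simp
  then have "A * B / (2 * R^2) \<le> \<gamma> / 2"
    using \<open>R > 0\<close> quarter(4) by (simp add: divide_simps)
  moreover have "Im (w^2) = - (A * B) / (2 * R^2)"
    using \<open>R > 0\<close> by (simp add: power2_eq_square Re Im field_simps)
  ultimately show ?thesis
    by simp
qed

lemma set_integrable_exp_decay:
  fixes a c :: real
  assumes "a > 0"
  shows "set_integrable lborel {c..} (\<lambda>x. exp (- a * x))"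
proof -
  have "(\<lambda>x. exp (- a * x)) absolutely_integrable_on {c..}"
    by (rule nonnegative_absolutely_integrable_1[OF integrable_on_exp_minus_to_infinity[OF assms]]) auto
  moreover have "(\<lambda>x. indicator {c..} x *\<^sub>R exp (- a * x)) \<in> borel_measurable lborel"
    by measurable
  ultimately show ?thesis
    using integrable_completion[of "\<lambda>x. indicator {c..} x *\<^sub>R exp (- a * x)" lborel]
    by (simp add: absolutely_integrable_on_def set_integrable_def)
qed

lemma L2p_of_exp_bound:
  fixes u :: "real \<Rightarrow> complex"
  assumes u: "continuous_on UNIV u" and "a > 0" and "c \<ge> 0"
    and bound: "\<And>x. x \<ge> c \<Longrightarrow> cmod (u x) \<le> C * exp (- a * x)"
  shows "L2p u"
proof -
  have meas: "u \<in> borel_measurable lborel"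
    using u by (simp add: borel_measurable_continuous_onI)
  have "set_integrable lborel {0..c} (\<lambda>x. (cmod (u x))^2)"
    by (rule borel_integrable_atLeastAtMost')
       (auto intro!: continuous_intros continuous_on_subset[OF u])
  moreover have "set_integrable lborel {c..} (\<lambda>x. (cmod (u x))^2)"
  proof (rule set_integrable_bound[of _ _ "\<lambda>x. C^2 * exp (- (2 * a) * x)"])
    show "set_integrable lborel {c..} (\<lambda>x. C^2 * exp (- (2 * a) * x))"
      using set_integrable_exp_decay[of "2 * a" c] \<open>a > 0\<close>
      by (intro set_integrable_mult_right) auto
    show "set_borel_measurable lborel {c..} (\<lambda>x. (cmod (u x))^2)"
      unfolding set_borel_measurable_def using meas by measurable
    have "(cmod (u x))^2 \<le> C^2 * exp (- (2 * a) * x)" if "x \<ge> c" for x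
    proof -
      have "(cmod (u x))^2 \<le> (C * exp (- a * x))^2"
        using bound[OF that] by (intro power_mono) auto
      also have "\<dots> = C^2 * exp (- (2 * a) * x)"
        by (simp add: power_mult_distrib flip: exp_double)
      finally show ?thesis .
    qed
    then show "AE x in lborel. x \<in> {c..} \<longrightarrow>
        norm ((cmod (u x))^2) \<le> norm (C^2 * exp (- (2 * a) * x))"
      by (intro AE_I2) auto
  qed
  ultimately have "set_integrable lborel ({0..c} \<union> {c..}) (\<lambda>x. (cmod (u x))^2)"
    by (rule set_integrable_Un) auto
  moreover have "{0..c} \<union> {c..} = {0::real..}"
    using \<open>c \<ge> 0\<close> by auto
  moreover have "set_borel_measurable lborel {0..} u"
    unfolding set_borel_measurable_def using meas by measurable
  ultimately show ?thesis
    by (simp add: L2p_def)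
qed

lemma not_set_integrable_eventually_ge_1:
  fixes f :: "real \<Rightarrow> real"
  assumes "eventually (\<lambda>x. 1 \<le> f x) at_top"
  shows "\<not> set_integrable lborel {0..} f"
proof
  assume f: "set_integrable lborel {0..} f"
  obtain X0 where X0: "\<And>x. x \<ge> X0 \<Longrightarrow> 1 \<le> f x"
    using assms by (auto simp: eventually_at_top_linorder)
  define X where "X = max X0 0"
  have X: "1 \<le> \<bar>f x\<bar>" if "x \<ge> X" for x
    using X0[of x] that by (simp add: X_def)
  have "integrable lborel (indicator {X..} :: real \<Rightarrow> real)"
  proof (rule Bochner_Integration.integrable_bound)
    show "integrable lborel (\<lambda>x. indicator {0..} x *\<^sub>R f x)"
      using f by (simp add: set_integrable_def)
    show "AE x in lborel. norm (indicator {X..} x :: real) \<le> norm (indicator {0..} x *\<^sub>R f x)"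
      using X by (intro AE_I2) (auto simp: indicator_def X_def)
  qed measurable
  then have "emeasure lborel {X..} < \<infinity>"
    by (simp add: integrable_indicator_iff)
  then obtain r where r: "emeasure lborel {X..} = ennreal r" and "r \<ge> 0"
    by (cases rule: ennreal_cases[of "emeasure lborel {X..}"]) auto
  have "emeasure lborel {X..X + (r + 1)} \<le> emeasure lborel {X..}"
    by (rule emeasure_mono) auto
  then show False
    using r \<open>r \<ge> 0\<close> by (simp add: ennreal_le_iff)
qed

lemma eventually_exp_dominates_affine:
  fixes q s p b r :: real
  assumes "q > 0" and "s > 0"
  shows "eventually (\<lambda>x. 1 \<le> q * exp (s * (x - r)) - (p + b * (x - r))) at_top"
  using assms by real_asymp

lemma set_integrable_potential_term:
  fixes u g :: "real \<Rightarrow> complex"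
  assumes u: "continuous_on UNIV u" and g: "continuous_on UNIV g"
  shows "set_integrable lborel {a..b}
    (\<lambda>t. \<i> * complex_of_real (\<gamma> * indicator {0..R} t) * u t - g t)"
proof (rule set_integral_diff(1))
  show "set_integrable lborel {a..b} g"
    by (rule borel_integrable_atLeastAtMost') (rule continuous_on_subset[OF g], auto)
  have meas: "u \<in> borel_measurable lborel"
    using u by (simp add: borel_measurable_continuous_onI)
  show "set_integrable lborel {a..b} (\<lambda>t. \<i> * complex_of_real (\<gamma> * indicator {0..R} t) * u t)"
  proof (rule set_integrable_bound[of _ _ "\<lambda>t. \<bar>\<gamma>\<bar> * cmod (u t)"])
    show "set_integrable lborel {a..b} (\<lambda>t. \<bar>\<gamma>\<bar> * cmod (u t))"
      by (rule borel_integrable_atLeastAtMost')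
         (auto intro!: continuous_intros continuous_on_subset[OF u])
    show "set_borel_measurable lborel {a..b}
        (\<lambda>t. \<i> * complex_of_real (\<gamma> * indicator {0..R} t) * u t)"
      unfolding set_borel_measurable_def using meas by measurable
    show "AE t in lborel. t \<in> {a..b} \<longrightarrow>
        norm (\<i> * complex_of_real (\<gamma> * indicator {0..R} t) * u t) \<le> norm (\<bar>\<gamma>\<bar> * cmod (u t))"
      by (intro AE_I2) (auto simp: norm_mult indicator_def)
  qed
qed

lemma L_rel_intro:
  fixes u v f :: "real \<Rightarrow> complex"
  assumes "L2p u" and "L2p f" and "u 0 = 0"
    and cont: "continuous_on UNIV u" "continuous_on UNIV v" "continuous_on UNIV f"
    and v: "\<And>x. x \<ge> 0 \<Longrightarrow> (v has_integral u x) {0..x}"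
    and h: "\<And>x. x \<ge> 0 \<Longrightarrow> ((\<lambda>t. \<i> * complex_of_real (\<gamma> * indicator {0..R} t) * u t - f t)
      has_integral (v x - v 0)) {0..x}"
  shows "L_rel \<gamma> R u f"
  unfolding L_rel_def
proof (intro conjI exI[of _ v] allI impI)
  fix x :: real
  assume "0 \<le> x"
  show iv: "set_integrable lborel {0..x} v"
    by (rule borel_integrable_atLeastAtMost') (rule continuous_on_subset[OF cont(2)], auto)
  show ih: "set_integrable lborel {0..x}
      (\<lambda>t. \<i> * complex_of_real (\<gamma> * indicator {0..R} t) * u t - f t)"
    by (rule set_integrable_potential_term[OF cont(1,3)])
  show "u x = (LINT t:{0..x}|lborel. v t)"
    using set_borel_integral_eq_integral(2)[OF iv] integral_unique[OF v[OF \<open>0 \<le> x\<close>]] by simp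
  show "v x = v 0 + (LINT t:{0..x}|lborel. \<i> * complex_of_real (\<gamma> * indicator {0..R} t) * u t - f t)"
    using set_borel_integral_eq_integral(2)[OF ih] integral_unique[OF h[OF \<open>0 \<le> x\<close>]] by simp
qed (use assms in auto)

lemma L_rel_has_integral:
  assumes "L_rel \<gamma> R u f"
  obtains v where "L2p u" and "u 0 = 0"
    and "\<And>x. x \<ge> 0 \<Longrightarrow> (v has_integral u x) {0..x}"
    and "\<And>x. x \<ge> 0 \<Longrightarrow> ((\<lambda>t. \<i> * complex_of_real (\<gamma> * indicator {0..R} t) * u t - f t)
      has_integral (v x - v 0)) {0..x}"
proof -
  obtain v where L: "L2p u" "u 0 = 0" and v: "\<And>x. x \<ge> 0 \<Longrightarrow> set_integrable lborel {0..x} v \<and>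
      set_integrable lborel {0..x} (\<lambda>t. \<i> * complex_of_real (\<gamma> * indicator {0..R} t) * u t - f t) \<and>
      u x = (LINT t:{0..x}|lborel. v t) \<and>
      v x = v 0 + (LINT t:{0..x}|lborel. \<i> * complex_of_real (\<gamma> * indicator {0..R} t) * u t - f t)"
    using assms unfolding L_rel_def by blast
  show ?thesis
  proof (rule that[of v])
    fix x :: real
    assume "x \<ge> 0"
    then have iv: "set_integrable lborel {0..x} v"
      and ih: "set_integrable lborel {0..x} (\<lambda>t. \<i> * complex_of_real (\<gamma> * indicator {0..R} t) * u t - f t)"
      and "u x = (LINT t:{0..x}|lborel. v t)"
      and "v x = v 0 + (LINT t:{0..x}|lborel. \<i> * complex_of_real (\<gamma> * indicator {0..R} t) * u t - f t)"
      using v by blast+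
    then show "(v has_integral u x) {0..x}"
      and "((\<lambda>t. \<i> * complex_of_real (\<gamma> * indicator {0..R} t) * u t - f t) has_integral (v x - v 0)) {0..x}"
      using set_borel_integral_eq_integral[OF iv] set_borel_integral_eq_integral[OF ih]
      by (simp_all add: has_integral_integral)
  qed (use L in auto)
qed

lemma has_integral_split_right:
  fixes f :: "real \<Rightarrow> 'a::banach"
  assumes "a \<le> c" and "c \<le> b" and "(f has_integral A) {a..b}" and "(f has_integral C) {a..c}"
  shows "(f has_integral (A - C)) {c..b}"
proof -
  have "f integrable_on {a..b}"
    using assms(3) by blast
  then have "f integrable_on {c..b}" and "integral {a..c} f + integral {c..b} f = integral {a..b} f"
    using assms(1,2) by (auto intro: integrable_subinterval_real
        Henstock_Kurzweil_Integration.integral_combine)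
  then show ?thesis
    using integral_unique[OF assms(3)] integral_unique[OF assms(4)]
    by (metis add_diff_cancel_left' has_integral_integrable_integral)
qed

lemma has_integral_exp_affine:
  fixes k a x :: real
  assumes "k > 0" and "a \<le> x"
  shows "((\<lambda>t. exp (k * (t - a))) has_integral (exp (k * (x - a)) - 1) / k) {a..x}"
proof -
  have "((\<lambda>t. exp (k * (t - a))) has_integral exp (k * (x - a)) / k - exp (k * (a - a)) / k) {a..x}"
  proof (rule fundamental_theorem_of_calculus)
    fix t
    have "((\<lambda>t. exp (k * (t - a)) / k) has_real_derivative exp (k * (t - a))) (at t within {a..x})"
      using assms(1) by (auto intro!: derivative_eq_intros)
    then show "((\<lambda>t. exp (k * (t - a)) / k) has_vector_derivative exp (k * (t - a))) (at t within {a..x})"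
      by (simp add: has_real_derivative_iff_has_vector_derivative)
  qed (use assms in auto)
  then show ?thesis
    by (simp add: diff_divide_distrib)
qed

text \<open>The weighted function \<open>N x * exp (- 2 C (x - a))\<close> attains a maximum \<open>m\<close>, and the
  hypothesis bounds it everywhere by \<open>m / 2\<close>.\<close>

lemma gronwall_zero:
  fixes N :: "real \<Rightarrow> real"
  assumes "a \<le> b" and N: "continuous_on {a..b} N" and N_nonneg: "\<And>x. x \<in> {a..b} \<Longrightarrow> 0 \<le> N x"
    and "C > 0" and N_le: "\<And>x. x \<in> {a..b} \<Longrightarrow> N x \<le> C * integral {a..x} N"
    and "x \<in> {a..b}"
  shows "N x = 0"
proof -
  define M where "M x = N x * exp (- (2 * C) * (x - a))" for x
  have "continuous_on {a..b} M"
    unfolding M_def by (intro continuous_intros N)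
  then obtain x0 where x0: "x0 \<in> {a..b}" and max: "\<And>y. y \<in> {a..b} \<Longrightarrow> M y \<le> M x0"
    using continuous_attains_sup[OF compact_Icc] \<open>a \<le> b\<close> by (metis atLeastAtMost_iff empty_iff order_refl)
  define m where "m = M x0"
  have "m \<ge> 0"
    unfolding m_def M_def using N_nonneg[OF x0] by simp
  have N_le_exp: "N t \<le> m * exp (2 * C * (t - a))" if "t \<in> {a..b}" for t
  proof -
    have "N t = M t * exp (2 * C * (t - a))"
      unfolding M_def by (simp add: mult.assoc flip: exp_add)
    then show ?thesis
      using max[OF that] by (simp add: m_def mult_right_mono)
  qed
  have M_le: "M t \<le> m / 2" if t: "t \<in> {a..b}" for t
  proof -
    have sub: "{a..t} \<subseteq> {a..b}"
      using t by auto
    have exp_int: "((\<lambda>s. m * exp (2 * C * (s - a))) has_integral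
        m * ((exp (2 * C * (t - a)) - 1) / (2 * C))) {a..t}"
      using t \<open>C > 0\<close> by (intro has_integral_mult_right has_integral_exp_affine) auto
    have "integral {a..t} N \<le> m * ((exp (2 * C * (t - a)) - 1) / (2 * C))"
      using N_le_exp sub
      by (intro has_integral_le[OF integrable_integral exp_int]
          integrable_continuous_interval continuous_on_subset[OF N sub]) auto
    then have "C * integral {a..t} N \<le> m / 2 * exp (2 * C * (t - a))"
      using \<open>C > 0\<close> \<open>m \<ge> 0\<close> by (simp add: field_simps)
    then have "N t \<le> m / 2 * exp (2 * C * (t - a))"
      using N_le[OF t] by linarith
    then have "M t \<le> m / 2 * exp (2 * C * (t - a)) * exp (- (2 * C) * (t - a))"
      unfolding M_def by (intro mult_right_mono) auto
    then show ?thesis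
      by (simp add: mult.assoc flip: exp_add)
  qed
  have "m = 0"
    using M_le[OF x0] \<open>m \<ge> 0\<close> unfolding m_def by simp
  then show ?thesis
    using M_le[OF assms(6)] N_nonneg[OF assms(6)] by (simp add: M_def mult_le_0_iff)
qed

lemma has_integral_indefinite_continuous:
  fixes f F :: "real \<Rightarrow> 'a::banach"
  assumes "\<And>x. x \<in> {a..b} \<Longrightarrow> (f has_integral F x) {a..x}"
  shows "continuous_on {a..b} F"
proof (cases "a \<le> b")
  case True
  have "continuous_on {a..b} (\<lambda>x. integral {a..x} f)"
    using assms[of b] True by (intro indefinite_integral_continuous_1) auto
  then show ?thesis
    using integral_unique[OF assms] by (rule continuous_on_eq)
qed simp

lemma linear_ode_zero:
  fixes y y' :: "real \<Rightarrow> complex" and \<kappa> :: complex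
  assumes "a \<le> b"
    and y: "\<And>x. x \<in> {a..b} \<Longrightarrow> (y' has_integral y x) {a..x}"
    and y': "\<And>x. x \<in> {a..b} \<Longrightarrow> ((\<lambda>t. \<kappa> * y t) has_integral y' x) {a..x}"
    and "x \<in> {a..b}"
  shows "y x = 0 \<and> y' x = 0"
proof -
  have cont_y: "continuous_on {a..b} y" and cont_y': "continuous_on {a..b} y'"
    using has_integral_indefinite_continuous[OF y] has_integral_indefinite_continuous[OF y'] by blast+
  define N where "N t = norm (y t) + norm (y' t)" for t
  have "continuous_on {a..b} N"
    unfolding N_def by (intro continuous_intros cont_y cont_y')
  have N_le: "N t \<le> (1 + norm \<kappa>) * integral {a..t} N" if t: "t \<in> {a..b}" for t
  proof -
    have N_int: "N integrable_on {a..t}"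
      using t by (intro integrable_continuous_interval continuous_on_subset[OF \<open>continuous_on {a..b} N\<close>]) auto
    have "norm (y t) \<le> integral {a..t} N"
      using integral_norm_bound_integral[OF has_integral_integrable[OF y[OF t]] N_int]
        integral_unique[OF y[OF t]] by (simp add: N_def)
    moreover have "norm (y' t) \<le> norm \<kappa> * integral {a..t} N"
    proof -
      have "norm (integral {a..t} (\<lambda>s. \<kappa> * y s)) \<le> integral {a..t} (\<lambda>s. norm \<kappa> * N s)"
      proof (rule integral_norm_bound_integral)
        show "(\<lambda>s. \<kappa> * y s) integrable_on {a..t}"
          using y'[OF t] by blast
        show "(\<lambda>s. norm \<kappa> * N s) integrable_on {a..t}"
          using N_int by (rule integrable_on_mult_right)
        show "norm (\<kappa> * y s) \<le> norm \<kappa> * N s" for s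
          by (simp add: N_def norm_mult mult_left_mono)
      qed
      then show ?thesis
        using integral_unique[OF y'[OF t]] by simp
    qed
    ultimately show ?thesis
      by (simp add: N_def algebra_simps)
  qed
  have "N t = 0" if "t \<in> {a..b}" for t
    using gronwall_zero[OF \<open>a \<le> b\<close> \<open>continuous_on {a..b} N\<close> _ _ N_le that]
    by (simp add: N_def add_pos_nonneg)
  then show ?thesis
    using \<open>x \<in> {a..b}\<close> by (simp add: N_def add_nonneg_eq_0_iff)
qed

lemma second_order_ode_unique:
  fixes u v h g p p' :: "real \<Rightarrow> complex" and \<kappa> :: complex
  assumes "a \<le> b"
    and u: "\<And>x. x \<in> {a..b} \<Longrightarrow> (v has_integral (u x - u a)) {a..x}"
    and v: "\<And>x. x \<in> {a..b} \<Longrightarrow> (h has_integral (v x - v a)) {a..x}"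
    and h: "\<And>t. t \<in> {a<..b} \<Longrightarrow> h t = \<kappa> * u t + g t"
    and p: "\<And>t. (p has_vector_derivative p' t) (at t)"
    and p': "\<And>t. (p' has_vector_derivative \<kappa> * p t + g t) (at t)"
    and "p a = u a" and "p' a = v a" and "x \<in> {a..b}"
  shows "u x = p x \<and> v x = p' x"
proof -
  have "u x - p x = 0 \<and> v x - p' x = 0"
  proof (rule linear_ode_zero[where y = "\<lambda>t. u t - p t" and y' = "\<lambda>t. v t - p' t" and \<kappa> = \<kappa>])
    fix x
    assume x: "x \<in> {a..b}"
    have "(p' has_integral (p x - p a)) {a..x}"
      using x p by (intro fundamental_theorem_of_calculus) (auto intro: has_vector_derivative_at_within)
    then show "((\<lambda>t. v t - p' t) has_integral (u x - p x)) {a..x}"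
      using has_integral_diff[OF u[OF x]] \<open>p a = u a\<close> by fastforce
    have "((\<lambda>t. \<kappa> * p t + g t) has_integral (p' x - p' a)) {a..x}"
      using x p' by (intro fundamental_theorem_of_calculus) (auto intro: has_vector_derivative_at_within)
    then have "((\<lambda>t. h t - (\<kappa> * p t + g t)) has_integral (v x - p' x)) {a..x}"
      using has_integral_diff[OF v[OF x]] \<open>p' a = v a\<close> by fastforce
    then show "((\<lambda>t. \<kappa> * (u t - p t)) has_integral (v x - p' x)) {a..x}"
      by (rule has_integral_spike_finite[where S = "{a}", rotated -1]) (use x h in \<open>auto simp: algebra_simps\<close>)
  qed (use assms in auto)
  then show ?thesis
    by simp
qed

lemma sq_notin_nonneg_reals:
  assumes "Im z > 0"
  shows "z^2 \<notin> complex_of_real ` {0..}"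
proof
  assume "z^2 \<in> complex_of_real ` {0..}"
  then have "Im (z^2) = 0" and "Re (z^2) \<ge> 0"
    by auto
  then show False
    using assms mult_pos_pos[OF assms assms] by (auto simp: power2_eq_square)
qed

locale matched_wavenumbers =
  fixes \<gamma> R :: real and w z :: complex
  assumes gamma_nonzero: "\<gamma> \<noteq> 0" and R_pos: "R > 0" and w_nonzero: "w \<noteq> 0"
    and z_sq: "z^2 = w^2 + \<i> * complex_of_real \<gamma>" and Im_z_pos: "Im z > 0"
    and matching: "w * cos (w * complex_of_real R) = \<i> * z * sin (w * complex_of_real R)"
begin

definition "sin_wR = sin (w * complex_of_real R)"

definition eigenfun :: "real \<Rightarrow> complex" where
  "eigenfun x = (if x \<le> R then sin (w * complex_of_real x)
    else sin_wR * exp (\<i> * z * complex_of_real (x - R)))"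

definition eigenfun' :: "real \<Rightarrow> complex" where
  "eigenfun' x = (if x \<le> R then w * cos (w * complex_of_real x)
    else \<i> * z * sin_wR * exp (\<i> * z * complex_of_real (x - R)))"

text \<open>The equation \<open>(L - z^2) u = f\<close> reads \<open>u'' = coeff * u - f\<close>.\<close>
definition coeff :: "real \<Rightarrow> complex" where
  "coeff x = \<i> * complex_of_real (\<gamma> * indicator {0..R} x) - z^2"

lemma z_nonzero: "z \<noteq> 0"
  using Im_z_pos by auto

lemma sin_wR_nonzero: "sin_wR \<noteq> 0"
proof
  assume "sin_wR = 0"
  then have "cos (w * complex_of_real R) = 0"
    using matching w_nonzero by (simp add: sin_wR_def)
  then show False
    using \<open>sin_wR = 0\<close> sin_cos_squared_add[of "w * complex_of_real R"] by (simp add: sin_wR_def)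
qed

lemma continuous_on_eigenfun: "continuous_on UNIV eigenfun"
  unfolding eigenfun_def
  by (rule continuous_on_cases_le) (auto intro!: continuous_intros simp: sin_wR_def)

lemma continuous_on_eigenfun': "continuous_on UNIV eigenfun'"
  unfolding eigenfun'_def
  by (rule continuous_on_cases_le) (auto intro!: continuous_intros simp: sin_wR_def matching)

lemma has_vector_derivative_outgoing:
  "((\<lambda>t. c * exp (\<i> * z * complex_of_real (t - R))) has_vector_derivative
    \<i> * z * (c * exp (\<i> * z * complex_of_real (x - R)))) (at x)"
proof -
  have "((\<lambda>s. c * exp (\<i> * z * (s - complex_of_real R))) has_field_derivative
      \<i> * z * (c * exp (\<i> * z * (complex_of_real x - complex_of_real R)))) (at (complex_of_real x))"
    by (auto intro!: derivative_eq_intros simp: algebra_simps)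
  from has_vector_derivative_real_field[OF this] show ?thesis
    by simp
qed

lemma eigenfun_has_derivative:
  assumes "x \<noteq> R"
  shows "(eigenfun has_vector_derivative eigenfun' x) (at x)"
proof (cases "x < R")
  case True
  have "((\<lambda>s. sin (w * s)) has_field_derivative w * cos (w * complex_of_real x)) (at (complex_of_real x))"
    by (auto intro!: derivative_eq_intros)
  from has_vector_derivative_real_field[OF this]
  have "((\<lambda>t. sin (w * complex_of_real t)) has_vector_derivative eigenfun' x) (at x)"
    using True by (simp add: eigenfun'_def)
  then show ?thesis
    by (rule has_vector_derivative_transform_within_open[of _ _ _ "{..<R}"])
       (use True in \<open>auto simp: eigenfun_def\<close>)
next
  case False
  then have "x > R"
    using assms by simp
  have "((\<lambda>t. sin_wR * exp (\<i> * z * complex_of_real (t - R))) has_vector_derivative eigenfun' x) (at x)"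
    using has_vector_derivative_outgoing[of sin_wR x] \<open>x > R\<close> by (simp add: eigenfun'_def mult.assoc)
  then show ?thesis
    by (rule has_vector_derivative_transform_within_open[of _ _ _ "{R<..}"])
       (use \<open>x > R\<close> in \<open>auto simp: eigenfun_def\<close>)
qed

lemma eigenfun'_has_derivative:
  assumes "x \<noteq> R" and "x > 0"
  shows "(eigenfun' has_vector_derivative coeff x * eigenfun x) (at x)"
proof (cases "x < R")
  case True
  have "((\<lambda>s. w * cos (w * s)) has_field_derivative - (w^2) * sin (w * complex_of_real x))
      (at (complex_of_real x))"
    by (auto intro!: derivative_eq_intros simp: power2_eq_square)
  from has_vector_derivative_real_field[OF this]
  have "((\<lambda>t. w * cos (w * complex_of_real t)) has_vector_derivative coeff x * eigenfun x) (at x)"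
    using True assms by (simp add: coeff_def eigenfun_def z_sq)
  then show ?thesis
    by (rule has_vector_derivative_transform_within_open[of _ _ _ "{..<R}"])
       (use True in \<open>auto simp: eigenfun'_def\<close>)
next
  case False
  then have "x > R"
    using assms by simp
  have "((\<lambda>t. \<i> * z * sin_wR * exp (\<i> * z * complex_of_real (t - R))) has_vector_derivative
      coeff x * eigenfun x) (at x)"
    using has_vector_derivative_outgoing[of "\<i> * z * sin_wR" x] \<open>x > R\<close>
    by (simp add: coeff_def eigenfun_def power2_eq_square algebra_simps)
  then show ?thesis
    by (rule has_vector_derivative_transform_within_open[of _ _ _ "{R<..}"])
       (use \<open>x > R\<close> in \<open>auto simp: eigenfun'_def\<close>)
qed

lemma eigenfun_0: "eigenfun 0 = 0"
  using R_pos by (simp add: eigenfun_def)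

lemma eigenfun_has_integral:
  assumes "x \<ge> 0"
  shows "(eigenfun' has_integral eigenfun x) {0..x}"
  using fundamental_theorem_of_calculus_interior_strong[of "{R}" 0 x eigenfun eigenfun'] assms
    eigenfun_has_derivative continuous_on_subset[OF continuous_on_eigenfun]
  by (simp add: eigenfun_0)

lemma eigenfun'_has_integral:
  assumes "x \<ge> 0"
  shows "((\<lambda>t. coeff t * eigenfun t) has_integral eigenfun' x - eigenfun' 0) {0..x}"
  by (rule fundamental_theorem_of_calculus_interior_strong[of "{R}"])
     (use assms in \<open>auto intro: eigenfun'_has_derivative continuous_on_subset[OF continuous_on_eigenfun']\<close>)

lemma norm_eigenfun_le:
  assumes "x \<ge> R"
  shows "cmod (eigenfun x) \<le> cmod sin_wR * exp (Im z * R) * exp (- Im z * x)"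
proof -
  have "cmod (eigenfun x) = cmod sin_wR * exp (- Im z * (x - R))"
    using assms by (cases "x = R") (simp_all add: eigenfun_def sin_wR_def norm_mult norm_exp_eq_Re)
  also have "\<dots> = cmod sin_wR * exp (Im z * R) * exp (- Im z * x)"
    by (simp add: algebra_simps flip: exp_add)
  finally show ?thesis
    by simp
qed

lemma L2p_scaled_eigenfun: "L2p (\<lambda>x. c * eigenfun x)"
proof (rule L2p_of_exp_bound)
  show "cmod (c * eigenfun x) \<le> cmod c * (cmod sin_wR * exp (Im z * R)) * exp (- Im z * x)"
    if "R \<le> x" for x
    using norm_eigenfun_le[OF that] by (simp add: norm_mult mult.assoc mult_left_mono)
qed (use R_pos Im_z_pos in \<open>auto intro!: continuous_intros continuous_on_eigenfun\<close>)

lemma L_rel_eigenfun: "L_rel \<gamma> R eigenfun (\<lambda>x. z^2 * eigenfun x)"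
proof (rule L_rel_intro[where v = eigenfun'])
  show "L2p eigenfun"
    using L2p_scaled_eigenfun[of 1] by simp
  show "L2p (\<lambda>x. z^2 * eigenfun x)"
    by (rule L2p_scaled_eigenfun)
  show "(eigenfun' has_integral eigenfun x) {0..x}" if "x \<ge> 0" for x
    using eigenfun_has_integral[OF that] .
  show "((\<lambda>t. \<i> * complex_of_real (\<gamma> * indicator {0..R} t) * eigenfun t - z^2 * eigenfun t)
      has_integral eigenfun' x - eigenfun' 0) {0..x}" if "x \<ge> 0" for x
    using eigenfun'_has_integral[OF that] by (simp add: coeff_def algebra_simps)
qed (auto intro!: continuous_intros continuous_on_eigenfun continuous_on_eigenfun' simp: eigenfun_0)

end

text \<open>The inner solution evaluated at \<open>R\<close> (first hypothesis) must satisfy the boundary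
  relation of the decaying outer solution; eliminating \<open>cos (w R)\<close> and the resonant
  amplitudes leaves this identity.\<close>

lemma resonance_identity:
  fixes ii d b bo s r C w z c :: complex
  assumes "ii * z * (d * s + b * r * C) + bo = d * w * C + b * (C - w * r * s)"
    and "w * C = ii * z * s" and "2 * w * b = c" and "2 * ii * z * bo = - (c * s)" and "ii^2 = -1"
  shows "ii * (c * s * (w^2 - z^2) * (r * z + ii)) = 0"
  using assms by algebra

text \<open>\<open>(L - z^2) u = c * eigenfun\<close> in the integrated form of \<^const>\<open>L_rel\<close>, with \<open>v = u'\<close>.\<close>

locale root_equation = matched_wavenumbers +
  fixes u v :: "real \<Rightarrow> complex" and c :: complex
  assumes u_0: "u 0 = 0" and L2p_u: "L2p u"
    and v_has_integral: "\<And>x. x \<ge> 0 \<Longrightarrow> (v has_integral u x) {0..x}"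
    and v'_has_integral: "\<And>x. x \<ge> 0 \<Longrightarrow>
      ((\<lambda>t. coeff t * u t - c * eigenfun t) has_integral (v x - v 0)) {0..x}"
begin

text \<open>On \<open>[0, R]\<close> the equation is \<open>u'' = -w^2 u - c sin (w x)\<close>; the forcing is resonant,
  whence the particular solution \<open>x cos (w x)\<close>.\<close>

definition "b_in = c / (2 * w)"
definition "d_in = (v 0 - b_in) / w"

definition "psi x = d_in * sin (w * complex_of_real x)
  + b_in * complex_of_real x * cos (w * complex_of_real x)"

definition "psi' x = d_in * w * cos (w * complex_of_real x)
  + b_in * (cos (w * complex_of_real x) - w * complex_of_real x * sin (w * complex_of_real x))"

lemma psi_has_derivative: "(psi has_vector_derivative psi' x) (at x)"
proof -
  have "((\<lambda>s. d_in * sin (w * s) + b_in * s * cos (w * s)) has_field_derivative psi' x)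
      (at (complex_of_real x))"
    by (auto intro!: derivative_eq_intros simp: psi'_def algebra_simps)
  from has_vector_derivative_real_field[OF this] show ?thesis
    by (simp add: psi_def[abs_def])
qed

lemma psi'_has_derivative:
  "(psi' has_vector_derivative - (w^2) * psi x + - c * sin (w * complex_of_real x)) (at x)"
proof -
  have "((\<lambda>s. d_in * w * cos (w * s) + b_in * (cos (w * s) - w * s * sin (w * s)))
      has_field_derivative - (w^2) * psi x + - c * sin (w * complex_of_real x)) (at (complex_of_real x))"
    using w_nonzero
    by (auto intro!: derivative_eq_intros simp: psi_def b_in_def power2_eq_square field_simps)
  from has_vector_derivative_real_field[OF this] show ?thesis
    by (simp add: psi'_def[abs_def])
qed

lemma u_eq_psi:
  assumes "x \<in> {0..R}"
  shows "u x = psi x \<and> v x = psi' x"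
proof (rule second_order_ode_unique[where h = "\<lambda>t. coeff t * u t - c * eigenfun t"])
  show "t \<in> {0<..R} \<Longrightarrow> coeff t * u t - c * eigenfun t = - (w^2) * u t + - c * sin (w * complex_of_real t)"
    for t
    by (simp add: coeff_def eigenfun_def z_sq)
  show "psi 0 = u 0" and "psi' 0 = v 0"
    using w_nonzero by (simp_all add: u_0 psi_def psi'_def d_in_def)
qed (use assms R_pos u_0 v_has_integral v'_has_integral psi_has_derivative psi'_has_derivative in auto)

text \<open>On \<open>[R, \<infinity>)\<close> the equation is \<open>u'' = -z^2 u - c sin (w R) outgoing x\<close>, again
  resonant; \<open>P\<close> and \<open>Q\<close> are fixed by the values of \<open>u\<close> and \<open>v\<close> at \<open>R\<close>.\<close>

definition "outgoing x = exp (\<i> * z * complex_of_real (x - R))"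
definition "incoming x = exp (- (\<i> * z * complex_of_real (x - R)))"

definition "b_out = - (c * sin_wR) / (2 * \<i> * z)"
definition "P = (u R + (v R - b_out) / (\<i> * z)) / 2"
definition "Q = (u R - (v R - b_out) / (\<i> * z)) / 2"

definition "phi x = (P + b_out * complex_of_real (x - R)) * outgoing x + Q * incoming x"

definition "phi' x = (\<i> * z * (P + b_out * complex_of_real (x - R)) + b_out) * outgoing x
  - \<i> * z * Q * incoming x"

lemma phi_has_derivative: "(phi has_vector_derivative phi' x) (at x)"
proof -
  have "((\<lambda>s. (P + b_out * (s - complex_of_real R)) * exp (\<i> * z * (s - complex_of_real R))
      + Q * exp (- (\<i> * z * (s - complex_of_real R)))) has_field_derivative phi' x) (at (complex_of_real x))"
    by (auto intro!: derivative_eq_intros simp: phi'_def outgoing_def incoming_def algebra_simps)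
  from has_vector_derivative_real_field[OF this] show ?thesis
    by (simp add: phi_def[abs_def] outgoing_def incoming_def)
qed

lemma phi'_has_derivative:
  "(phi' has_vector_derivative - (z^2) * phi x + - c * sin_wR * outgoing x) (at x)"
proof -
  have "((\<lambda>s. (\<i> * z * (P + b_out * (s - complex_of_real R)) + b_out) * exp (\<i> * z * (s - complex_of_real R))
      - \<i> * z * Q * exp (- (\<i> * z * (s - complex_of_real R)))) has_field_derivative
      - (z^2) * phi x + - c * sin_wR * outgoing x) (at (complex_of_real x))"
    using z_nonzero
    by (auto intro!: derivative_eq_intros
        simp: phi_def outgoing_def incoming_def b_out_def power2_eq_square field_simps)
  from has_vector_derivative_real_field[OF this] show ?thesis
    by (simp add: phi'_def[abs_def] outgoing_def incoming_def)
qed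

lemma u_eq_phi:
  assumes "R \<le> x"
  shows "u x = phi x \<and> v x = phi' x"
proof (rule second_order_ode_unique[where h = "\<lambda>t. coeff t * u t - c * eigenfun t" and a = R and b = x])
  show "(v has_integral u t - u R) {R..t}" if "t \<in> {R..x}" for t
    using has_integral_split_right[OF _ _ v_has_integral v_has_integral] that R_pos by auto
  show "((\<lambda>t. coeff t * u t - c * eigenfun t) has_integral v t - v R) {R..t}" if "t \<in> {R..x}" for t
    using has_integral_split_right[OF _ _ v'_has_integral v'_has_integral] that R_pos by auto
  show "t \<in> {R<..x} \<Longrightarrow> coeff t * u t - c * eigenfun t = - (z^2) * u t + - c * sin_wR * outgoing t"
    for t
    by (simp add: coeff_def eigenfun_def outgoing_def)
  show "phi R = u R" and "phi' R = v R"
    using z_nonzero by (simp_all add: phi_def phi'_def outgoing_def incoming_def P_def Q_def field_simps)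
qed (use assms phi_has_derivative phi'_has_derivative in auto)

lemma norm_phi_ge:
  assumes "R \<le> x"
  shows "cmod Q * exp (Im z * (x - R)) - (cmod P + cmod b_out * (x - R)) \<le> cmod (phi x)"
proof -
  have "cmod (outgoing x) \<le> 1"
    using assms Im_z_pos by (simp add: outgoing_def norm_exp_eq_Re)
  then have "cmod ((P + b_out * complex_of_real (x - R)) * outgoing x)
      \<le> cmod (P + b_out * complex_of_real (x - R))"
    by (simp add: norm_mult mult_left_le)
  also have "\<dots> \<le> cmod P + cmod (b_out * complex_of_real (x - R))"
    by (rule norm_triangle_ineq)
  also have "\<dots> = cmod P + cmod b_out * (x - R)"
    using assms by (simp add: norm_mult del: of_real_diff)
  finally have "cmod ((P + b_out * complex_of_real (x - R)) * outgoing x) \<le> cmod P + cmod b_out * (x - R)" .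
  moreover have "cmod (Q * incoming x) = cmod Q * exp (Im z * (x - R))"
    by (simp add: incoming_def norm_mult norm_exp_eq_Re)
  ultimately show ?thesis
    using norm_diff_ineq[of "Q * incoming x" "(P + b_out * complex_of_real (x - R)) * outgoing x"]
    by (simp add: phi_def add.commute)
qed

text \<open>The incoming wave grows exponentially, so square integrability of \<open>u\<close> rules it out.\<close>

lemma Q_eq_0: "Q = 0"
proof (rule ccontr)
  assume "Q \<noteq> 0"
  then have "cmod Q > 0"
    by simp
  then have "eventually (\<lambda>x. 1 \<le> cmod Q * exp (Im z * (x - R)) - (cmod P + cmod b_out * (x - R))) at_top"
    using Im_z_pos by (rule eventually_exp_dominates_affine)
  moreover have "eventually (\<lambda>x. R \<le> x) at_top"
    by (rule eventually_ge_at_top)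
  ultimately have "eventually (\<lambda>x. 1 \<le> (cmod (u x))^2) at_top"
  proof eventually_elim
    case (elim x)
    then have "1 \<le> cmod (phi x)"
      using norm_phi_ge[of x] by linarith
    moreover have "u x = phi x"
      using u_eq_phi elim by blast
    ultimately show ?case
      by (simp add: one_le_power)
  qed
  then show False
    using L2p_u not_set_integrable_eventually_ge_1 by (auto simp: L2p_def)
qed

lemma c_eq_0: "c = 0"
proof -
  define C where "C = cos (w * complex_of_real R)"
  have "v R = \<i> * z * u R + b_out"
    using Q_eq_0 z_nonzero by (simp add: Q_def field_simps)
  then have "\<i> * z * psi R + b_out = psi' R"
    using u_eq_psi[of R] R_pos by simp
  then have A: "\<i> * z * (d_in * sin_wR + b_in * complex_of_real R * C) + b_out
      = d_in * w * C + b_in * (C - w * complex_of_real R * sin_wR)"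
    by (simp add: psi_def psi'_def sin_wR_def C_def mult.assoc)
  have B: "w * C = \<i> * z * sin_wR"
    using matching by (simp add: C_def sin_wR_def)
  have C: "2 * w * b_in = c"
    using w_nonzero by (simp add: b_in_def)
  have D: "2 * \<i> * z * b_out = - (c * sin_wR)"
    using z_nonzero by (simp add: b_out_def)
  have "c * sin_wR * (w^2 - z^2) * (complex_of_real R * z + \<i>) = 0"
    using resonance_identity[OF A B C D] by simp
  moreover have "w^2 - z^2 \<noteq> 0"
    using z_sq gamma_nonzero by simp
  moreover have "complex_of_real R * z + \<i> \<noteq> 0"
  proof
    assume "complex_of_real R * z + \<i> = 0"
    then have "Im (complex_of_real R * z + \<i>) = 0"
      by simp
    then show False
      using mult_pos_pos[OF R_pos Im_z_pos] by simp
  qed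
  ultimately show ?thesis
    using sin_wR_nonzero by simp
qed

lemma u_in_span: "\<exists>d. \<forall>x\<ge>0. u x = d * eigenfun x"
proof (intro exI allI impI)
  fix x :: real
  assume "x \<ge> 0"
  have "b_in = 0" and "b_out = 0"
    unfolding b_in_def b_out_def using c_eq_0 by simp_all
  show "u x = d_in * eigenfun x"
  proof (cases "x \<le> R")
    case True
    then show ?thesis
      using u_eq_psi[of x] \<open>x \<ge> 0\<close> \<open>b_in = 0\<close> by (simp add: psi_def eigenfun_def)
  next
    case False
    have "u R = d_in * sin_wR"
      using u_eq_psi[of R] R_pos \<open>b_in = 0\<close> by (simp add: psi_def sin_wR_def)
    moreover have "P = u R"
    proof -
      have "(v R - b_out) / (\<i> * z) = u R"
        using Q_eq_0 by (simp add: Q_def)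
      then show ?thesis
        by (simp add: P_def)
    qed
    ultimately show ?thesis
      using u_eq_phi[of x] False Q_eq_0 \<open>b_out = 0\<close>
      by (simp add: phi_def eigenfun_def outgoing_def)
  qed
qed

end

context matched_wavenumbers
begin

lemma L_rel_in_span:
  assumes "L_rel \<gamma> R u f" and f: "\<And>x. x \<ge> 0 \<Longrightarrow> f x = z^2 * u x + c * eigenfun x"
  shows "\<exists>d. \<forall>x\<ge>0. u x = d * eigenfun x"
proof -
  obtain v where "L2p u" "u 0 = 0" and v: "\<And>x. x \<ge> 0 \<Longrightarrow> (v has_integral u x) {0..x}"
    and h: "\<And>x. x \<ge> 0 \<Longrightarrow> ((\<lambda>t. \<i> * complex_of_real (\<gamma> * indicator {0..R} t) * u t - f t)
      has_integral (v x - v 0)) {0..x}"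
    using L_rel_has_integral[OF assms(1)] by blast
  have "root_equation \<gamma> R w z u v c"
  proof (intro root_equation.intro matched_wavenumbers_axioms root_equation_axioms.intro)
    show "u 0 = 0" and "L2p u"
      by fact+
    show "(v has_integral u x) {0..x}" if "x \<ge> 0" for x
      using v[OF that] .
    show "((\<lambda>t. coeff t * u t - c * eigenfun t) has_integral v x - v 0) {0..x}" if "x \<ge> 0" for x
    proof -
      have "((\<lambda>t. coeff t * u t - c * eigenfun t) has_integral v x - v 0) {0..x}
          = ((\<lambda>t. \<i> * complex_of_real (\<gamma> * indicator {0..R} t) * u t - f t) has_integral v x - v 0) {0..x}"
        by (rule has_integral_cong) (simp add: f coeff_def algebra_simps)
      then show ?thesis
        using h[OF that] by simp
    qed
  qed
  then show ?thesis
    by (rule root_equation.u_in_span)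
qed

lemma Jordan_chain_in_span:
  assumes "\<forall>i<k. L_rel \<gamma> R (us i) (\<lambda>x. z^2 * us i x + us (Suc i) x)" and "\<forall>x\<ge>0. us k x = 0"
  shows "\<exists>d. \<forall>x\<ge>0. us 0 x = d * eigenfun x"
  using assms
proof (induction k arbitrary: us)
  case 0
  then show ?case
    by (intro exI[of _ 0]) auto
next
  case (Suc k)
  then obtain d where "\<And>x. x \<ge> 0 \<Longrightarrow> us (Suc 0) x = d * eigenfun x"
    using Suc.IH[of "\<lambda>i. us (Suc i)"] by auto
  moreover have "L_rel \<gamma> R (us 0) (\<lambda>x. z^2 * us 0 x + us (Suc 0) x)"
    using Suc.prems by auto
  ultimately show ?case
    by (intro L_rel_in_span[where u = "us 0" and f = "\<lambda>x. z^2 * us 0 x + us (Suc 0) x" and c = d]) auto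
qed

lemma sq_in_sigma_d: "z^2 \<in> sigma_d \<gamma> R"
  unfolding sigma_d_def
proof (intro CollectI conjI)
  show "z^2 \<notin> complex_of_real ` {0..}"
    using Im_z_pos by (rule sq_notin_nonneg_reals)
  have "eigenfun R \<noteq> 0"
    using sin_wR_nonzero by (simp add: eigenfun_def sin_wR_def)
  then show "is_eigenvalue \<gamma> R (z^2)"
    unfolding is_eigenvalue_def
    by (intro exI[of _ eigenfun] conjI L_rel_eigenfun exI[of _ R]) (use R_pos in auto)
  show "finite_alg_mult \<gamma> R (z^2)"
    unfolding finite_alg_mult_def
  proof (intro exI[of _ "{eigenfun}"] conjI ballI)
    fix u
    assume "u \<in> gen_eigenspace \<gamma> R (z^2)"
    then obtain d where "\<forall>x\<ge>0. u x = d * eigenfun x"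
      unfolding gen_eigenspace_def using Jordan_chain_in_span by blast
    then show "\<exists>c. \<forall>x\<ge>0. u x = (\<Sum>b\<in>{eigenfun}. c b * b x)"
      by (intro exI[of _ "\<lambda>_. d"]) simp
  qed simp
qed

end

lemma fixed_point_matched_wavenumbers:
  assumes "\<gamma> > 0" and "R > 0" and "1 \<le> j" and "w = G_fun \<gamma> j R w"
    and "Im (w^2 + \<i> * complex_of_real \<gamma>) > 0"
  shows "matched_wavenumbers \<gamma> R w (sq_m (w^2 + \<i> * complex_of_real \<gamma>))"
proof
  show "\<gamma> \<noteq> 0" and "R > 0"
    using assms(1,2) by simp_all
  show "w \<noteq> 0"
    using fixed_point_Re_neg[OF assms(2-4)] by auto
  show "(sq_m (w^2 + \<i> * complex_of_real \<gamma>))^2 = w^2 + \<i> * complex_of_real \<gamma>"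
    by (rule sq_m_squared)
  show "Im (sq_m (w^2 + \<i> * complex_of_real \<gamma>)) > 0"
    using assms(5) by (rule Im_sq_m_pos)
  show "w * cos (w * complex_of_real R)
      = \<i> * sq_m (w^2 + \<i> * complex_of_real \<gamma>) * sin (w * complex_of_real R)"
    using assms(1,2,4) by (intro fixed_point_matching) auto
qed

theorem lemma2p4:
  fixes \<gamma> R :: real and j :: nat and w :: complex
  assumes "\<gamma> > 0"
    and "R \<ge> 600 * (\<gamma> powr (3/4) + \<gamma> powr (-3/4))"
    and "1 \<le> j"
    and "int j \<le> \<lfloor>(1 / (32 * pi)) * (\<gamma> * R^2 / ln R)\<rfloor>"
    and "w \<in> F_j \<gamma> j"
    and "w = G_fun \<gamma> j R w"
  shows "- \<gamma> / 2 \<le> Im (w^2) \<and> Im (w^2) \<le> 0 \<and>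
         Im (w^2 + \<i> * complex_of_real \<gamma>) > 0 \<and>
         w^2 + \<i> * complex_of_real \<gamma> \<in> sigma_d \<gamma> R"
proof -
  have "R > 0"
    using assms(1,2) by (smt (verit) powr_gt_zero)
  have lower: "- \<gamma> / 2 \<le> Im (w^2)"
    using assms(4) by (intro Im_sq_fixed_point_ge[OF assms(1,2) _ assms(5,6)]) (simp add: le_floor_iff)
  have upper: "Im (w^2) \<le> 0"
    using assms(5) by (intro Im_sq_le_0_of_F_inf) (simp add: F_j_def)
  have Im_pos: "Im (w^2 + \<i> * complex_of_real \<gamma>) > 0"
    using lower assms(1) by simp
  interpret matched_wavenumbers \<gamma> R w "sq_m (w^2 + \<i> * complex_of_real \<gamma>)"
    using fixed_point_matched_wavenumbers[OF assms(1) \<open>R > 0\<close> assms(3,6) Im_pos] .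
  show ?thesis
    using lower upper Im_pos sq_in_sigma_d z_sq by simp
qed

end
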